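(* Let $\mathcal{T}$ be a $\operatorname{Hom}$-finite Krull–Schmidt triangulated category over an algebraically closed field and $\mathcal{D}$, $\mathcal{X}$, $\mathcal{Y}$ subcategories of $\mathcal{T}$. Then $(\mathcal{X},\mathcal{Y})$ is a $\mathcal{D}$-mutation pair if and only if it is a $[\mathcal{D}]$-mutation pair.
   Context: Subcategories are full and closed under isomorphisms, finite direct sums and direct summands. $[\mathcal{D}]$ is the ideal of morphisms factoring through an object of $\mathcal{D}$. For an ideal $\mathcal{I}$, $\operatorname{Ob}(\mathcal{I})$ is the subcategory of $X$ with $\mathrm{id}_X\in\mathcal{I}$; a left $\mathcal{I}$-approximation of $X$ is a morphism in $\mathcal{I}$ starting at $X$ through which every morphism of $\mathcal{I}$ starting at $X$ factors, and right approximations are dual. A left $\mathcal{D}$-approximation of $X$ is $f:X\to M$ with $M\in\mathcal{D}$ such that every morphism $X\to D$ with $D\in\mathcal{D}$ factors through $f$; right dually. $(\mathcal{X},\mathcal{Y})$ is a $\mathcal{D}$-mutation pair if $\mathcal{D}\subseteq\mathcal{X}\cap\mathcal{Y}$, each $X\in\mathcal{X}$ admits a triangle $X\xrightarrow{f}M\xrightarrow{g}Y\to X[1]$ with $Y\in\mathcal{Y}$, $f$ a left $\mathcal{D}$-approximation, $g$ a right $\mathcal{D}$-approximation, and each $Y\in\mathcal{Y}$ admits a triangle $X\xrightarrow{u}N\xrightarrow{v}Y\to X[1]$ with $X\in\mathcal{X}$, $v$ a right and $u$ a left $\mathcal{D}$-approximation. $(\mathcal{X},\mathcal{Y})$ is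 an $\mathcal{I}$-mutation pair if the same holds with $\operatorname{Ob}(\mathcal{I})\subseteq\mathcal{X}\cap\mathcal{Y}$ and left/right $\mathcal{I}$-approximations in place of $\mathcal{D}$-approximations. *)

theory Defs
  imports "HOL-Computational_Algebra.Polynomial"
begin

text \<open>Objects of type 'o, morphisms of type 'm (each morphism carries its domain and codomain),
  scalars of type 'k. tcomp C g f is the composite g after f. ttri C is the class of
  distinguished triangles, a triple (f,g,h) standing for X -f-> Y -g-> Z -h-> X[1].\<close>

record ('o, 'm, 'k) tcat =
  tobj :: "'o set"
  tmor :: "'m set"
  tdom :: "'m \<Rightarrow> 'o"
  tcod :: "'m \<Rightarrow> 'o"
  tcomp :: "'m \<Rightarrow> 'm \<Rightarrow> 'm"
  tid :: "'o \<Rightarrow> 'm"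
  tadd :: "'m \<Rightarrow> 'm \<Rightarrow> 'm"
  tsmul :: "'k \<Rightarrow> 'm \<Rightarrow> 'm"
  tzero :: "'o \<Rightarrow> 'o \<Rightarrow> 'm"
  tshO :: "'o \<Rightarrow> 'o"
  tshM :: "'m \<Rightarrow> 'm"
  ttri :: "('m \<times> 'm \<times> 'm) set"

definition hom :: "('o, 'm, 'k) tcat \<Rightarrow> 'o \<Rightarrow> 'o \<Rightarrow> 'm set" where
  "hom C X Y = {f \<in> tmor C. tdom C f = X \<and> tcod C f = Y}"

definition category :: "('o, 'm, 'k) tcat \<Rightarrow> bool" where
  "category C \<longleftrightarrow>
    (\<forall>f\<in>tmor C. tdom C f \<in> tobj C \<and> tcod C f \<in> tobj C) \<and>
    (\<forall>X\<in>tobj C. tid C X \<in> hom C X X) \<and>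
    (\<forall>X\<in>tobj C. \<forall>Y\<in>tobj C. \<forall>Z\<in>tobj C. \<forall>f\<in>hom C X Y. \<forall>g\<in>hom C Y Z.
       tcomp C g f \<in> hom C X Z) \<and>
    (\<forall>W\<in>tobj C. \<forall>X\<in>tobj C. \<forall>Y\<in>tobj C. \<forall>Z\<in>tobj C.
       \<forall>f\<in>hom C W X. \<forall>g\<in>hom C X Y. \<forall>h\<in>hom C Y Z.
       tcomp C h (tcomp C g f) = tcomp C (tcomp C h g) f) \<and>
    (\<forall>f\<in>tmor C. tcomp C (tid C (tcod C f)) f = f \<and> tcomp C f (tid C (tdom C f)) = f)"

definition linear_category :: "('o, 'm, 'k::field) tcat \<Rightarrow> bool" where
  "linear_category C \<longleftrightarrow> category C \<and>
    (\<forall>X\<in>tobj C. \<forall>Y\<in>tobj C.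
      tzero C X Y \<in> hom C X Y \<and>
      (\<forall>f\<in>hom C X Y. \<forall>g\<in>hom C X Y. tadd C f g \<in> hom C X Y) \<and>
      (\<forall>a. \<forall>f\<in>hom C X Y. tsmul C a f \<in> hom C X Y) \<and>
      (\<forall>f\<in>hom C X Y. \<forall>g\<in>hom C X Y. \<forall>h\<in>hom C X Y.
         tadd C (tadd C f g) h = tadd C f (tadd C g h)) \<and>
      (\<forall>f\<in>hom C X Y. \<forall>g\<in>hom C X Y. tadd C f g = tadd C g f) \<and>
      (\<forall>f\<in>hom C X Y. tadd C f (tzero C X Y) = f) \<and>
      (\<forall>f\<in>hom C X Y. \<exists>g\<in>hom C X Y. tadd C f g = tzero C X Y) \<and>
      (\<forall>a. \<forall>f\<in>hom C X Y. \<forall>g\<in>hom C X Y.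
         tsmul C a (tadd C f g) = tadd C (tsmul C a f) (tsmul C a g)) \<and>
      (\<forall>a b. \<forall>f\<in>hom C X Y. tsmul C (a + b) f = tadd C (tsmul C a f) (tsmul C b f)) \<and>
      (\<forall>a b. \<forall>f\<in>hom C X Y. tsmul C a (tsmul C b f) = tsmul C (a * b) f) \<and>
      (\<forall>f\<in>hom C X Y. tsmul C 1 f = f)) \<and>
    (\<forall>X\<in>tobj C. \<forall>Y\<in>tobj C. \<forall>Z\<in>tobj C.
      \<forall>f\<in>hom C X Y. \<forall>f'\<in>hom C X Y. \<forall>g\<in>hom C Y Z. \<forall>g'\<in>hom C Y Z. \<forall>a.
        tcomp C (tadd C g g') f = tadd C (tcomp C g f) (tcomp C g' f) \<and>
        tcomp C g (tadd C f f') = tadd C (tcomp C g f) (tcomp C g f') \<and>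
        tcomp C (tsmul C a g) f = tsmul C a (tcomp C g f) \<and>
        tcomp C g (tsmul C a f) = tsmul C a (tcomp C g f))"

fun lincomb :: "('o, 'm, 'k) tcat \<Rightarrow> 'o \<Rightarrow> 'o \<Rightarrow> ('k \<times> 'm) list \<Rightarrow> 'm" where
  "lincomb C X Y [] = tzero C X Y"
| "lincomb C X Y ((c, b) # xs) = tadd C (tsmul C c b) (lincomb C X Y xs)"

definition hom_finite :: "('o, 'm, 'k::field) tcat \<Rightarrow> bool" where
  "hom_finite C \<longleftrightarrow> linear_category C \<and>
    (\<forall>X\<in>tobj C. \<forall>Y\<in>tobj C. \<exists>B. set B \<subseteq> hom C X Y \<and>
       (\<forall>f\<in>hom C X Y. \<exists>cs. length cs = length B \<and> f = lincomb C X Y (zip cs B)))"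

definition neg :: "('o, 'm, 'k::ring_1) tcat \<Rightarrow> 'm \<Rightarrow> 'm" where
  "neg C f = tsmul C (-1) f"

definition iso :: "('o, 'm, 'k) tcat \<Rightarrow> 'm \<Rightarrow> bool" where
  "iso C f \<longleftrightarrow> f \<in> tmor C \<and> (\<exists>g\<in>hom C (tcod C f) (tdom C f).
     tcomp C g f = tid C (tdom C f) \<and> tcomp C f g = tid C (tcod C f))"

definition isomorphic :: "('o, 'm, 'k) tcat \<Rightarrow> 'o \<Rightarrow> 'o \<Rightarrow> bool" where
  "isomorphic C X Y \<longleftrightarrow> (\<exists>f\<in>hom C X Y. iso C f)"

definition is_zero_obj :: "('o, 'm, 'k) tcat \<Rightarrow> 'o \<Rightarrow> bool" where
  "is_zero_obj C Z \<longleftrightarrow> Z \<in> tobj C \<and> tid C Z = tzero C Z Z"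

definition biproduct :: "('o, 'm, 'k) tcat \<Rightarrow> 'o \<Rightarrow> 'o \<Rightarrow> 'o \<Rightarrow> bool" where
  "biproduct C S X1 X2 \<longleftrightarrow> S \<in> tobj C \<and> X1 \<in> tobj C \<and> X2 \<in> tobj C \<and>
    (\<exists>i1\<in>hom C X1 S. \<exists>i2\<in>hom C X2 S. \<exists>p1\<in>hom C S X1. \<exists>p2\<in>hom C S X2.
      tcomp C p1 i1 = tid C X1 \<and> tcomp C p2 i2 = tid C X2 \<and>
      tcomp C p1 i2 = tzero C X2 X1 \<and> tcomp C p2 i1 = tzero C X1 X2 \<and>
      tadd C (tcomp C i1 p1) (tcomp C i2 p2) = tid C S)"

definition additive_category :: "('o, 'm, 'k::field) tcat \<Rightarrow> bool" where
  "additive_category C \<longleftrightarrow> linear_category C \<and>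
    (\<exists>Z. is_zero_obj C Z) \<and>
    (\<forall>X1\<in>tobj C. \<forall>X2\<in>tobj C. \<exists>S. biproduct C S X1 X2)"

definition local_end :: "('o, 'm, 'k::ring_1) tcat \<Rightarrow> 'o \<Rightarrow> bool" where
  "local_end C X \<longleftrightarrow> X \<in> tobj C \<and> \<not> is_zero_obj C X \<and>
    (\<forall>f\<in>hom C X X. iso C f \<or> iso C (tadd C (tid C X) (neg C f)))"

inductive ks_sum :: "('o, 'm, 'k::ring_1) tcat \<Rightarrow> 'o \<Rightarrow> bool" for C where
  ks_zero: "is_zero_obj C Z \<Longrightarrow> ks_sum C Z"
| ks_step: "local_end C X1 \<Longrightarrow> ks_sum C X2 \<Longrightarrow> biproduct C S X1 X2 \<Longrightarrow> ks_sum C S"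

definition krull_schmidt :: "('o, 'm, 'k::field) tcat \<Rightarrow> bool" where
  "krull_schmidt C \<longleftrightarrow> additive_category C \<and> (\<forall>X\<in>tobj C. ks_sum C X)"

definition tri_shape :: "('o, 'm, 'k) tcat \<Rightarrow> 'm \<times> 'm \<times> 'm \<Rightarrow> bool" where
  "tri_shape C t = (case t of (f, g, h) \<Rightarrow>
     f \<in> tmor C \<and> g \<in> tmor C \<and> h \<in> tmor C \<and>
     tdom C g = tcod C f \<and> tdom C h = tcod C g \<and> tcod C h = tshO C (tdom C f))"

definition shift_ok :: "('o, 'm, 'k) tcat \<Rightarrow> bool" where
  "shift_ok C \<longleftrightarrow>
    (\<forall>X\<in>tobj C. tshO C X \<in> tobj C) \<and>
    (\<forall>X\<in>tobj C. \<forall>Y\<in>tobj C. bij_betw (tshM C) (hom C X Y) (hom C (tshO C X) (tshO C Y))) \<and>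
    (\<forall>X\<in>tobj C. tshM C (tid C X) = tid C (tshO C X)) \<and>
    (\<forall>X\<in>tobj C. \<forall>Y\<in>tobj C. \<forall>Z\<in>tobj C. \<forall>f\<in>hom C X Y. \<forall>g\<in>hom C Y Z.
       tshM C (tcomp C g f) = tcomp C (tshM C g) (tshM C f)) \<and>
    (\<forall>X\<in>tobj C. \<forall>Y\<in>tobj C. \<forall>f\<in>hom C X Y. \<forall>g\<in>hom C X Y. \<forall>a.
       tshM C (tadd C f g) = tadd C (tshM C f) (tshM C g) \<and>
       tshM C (tsmul C a f) = tsmul C a (tshM C f)) \<and>
    (\<forall>Y\<in>tobj C. \<exists>X\<in>tobj C. isomorphic C (tshO C X) Y)"

definition triangulated :: "('o, 'm, 'k::field) tcat \<Rightarrow> bool" where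
  "triangulated C \<longleftrightarrow> additive_category C \<and> shift_ok C \<and>
    (\<forall>t\<in>ttri C. tri_shape C t) \<and>
    \<comment> \<open>TR1: closure under isomorphisms of triangles\<close>
    (\<forall>f g h f' g' h' a b c. (f, g, h) \<in> ttri C \<and> tri_shape C (f', g', h') \<and>
       a \<in> hom C (tdom C f) (tdom C f') \<and> b \<in> hom C (tcod C f) (tcod C f') \<and>
       c \<in> hom C (tcod C g) (tcod C g') \<and> iso C a \<and> iso C b \<and> iso C c \<and>
       tcomp C b f = tcomp C f' a \<and> tcomp C c g = tcomp C g' b \<and>
       tcomp C (tshM C a) h = tcomp C h' c \<longrightarrow> (f', g', h') \<in> ttri C) \<and>
    \<comment> \<open>TR1: identity triangles\<close>
    (\<forall>X\<in>tobj C. \<forall>Z. is_zero_obj C Z \<longrightarrow>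
       (tid C X, tzero C X Z, tzero C Z (tshO C X)) \<in> ttri C) \<and>
    \<comment> \<open>TR1: every morphism embeds in a triangle\<close>
    (\<forall>f\<in>tmor C. \<exists>g h. (f, g, h) \<in> ttri C) \<and>
    \<comment> \<open>TR2: rotation\<close>
    (\<forall>f g h. tri_shape C (f, g, h) \<longrightarrow>
       ((f, g, h) \<in> ttri C \<longleftrightarrow> (g, h, neg C (tshM C f)) \<in> ttri C)) \<and>
    \<comment> \<open>TR3: morphisms of triangles\<close>
    (\<forall>f g h f' g' h' a b. (f, g, h) \<in> ttri C \<and> (f', g', h') \<in> ttri C \<and>
       a \<in> hom C (tdom C f) (tdom C f') \<and> b \<in> hom C (tcod C f) (tcod C f') \<and>
       tcomp C b f = tcomp C f' a \<longrightarrow>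
       (\<exists>c\<in>hom C (tcod C g) (tcod C g').
          tcomp C c g = tcomp C g' b \<and> tcomp C (tshM C a) h = tcomp C h' c)) \<and>
    \<comment> \<open>TR4: octahedral axiom\<close>
    (\<forall>f g u v j k l m. f \<in> tmor C \<and> g \<in> tmor C \<and> tdom C g = tcod C f \<and>
       (f, u, v) \<in> ttri C \<and> (g, j, k) \<in> ttri C \<and> (tcomp C g f, l, m) \<in> ttri C \<longrightarrow>
       (\<exists>p\<in>hom C (tcod C u) (tcod C l). \<exists>q\<in>hom C (tcod C l) (tcod C j).
          (p, q, tcomp C (tshM C u) k) \<in> ttri C \<and>
          tcomp C p u = tcomp C l g \<and> tcomp C m p = v \<and>
          tcomp C q l = j \<and> tcomp C k q = tcomp C (tshM C f) m))"

definition alg_closed :: "'k::field itself \<Rightarrow> bool" where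
  "alg_closed _ \<longleftrightarrow> (\<forall>p :: 'k poly. degree p \<noteq> 0 \<longrightarrow> (\<exists>x. poly p x = 0))"

text \<open>Subcategory: full (given by a set of objects), closed under isomorphisms,
  finite direct sums and direct summands.\<close>
definition subcat :: "('o, 'm, 'k) tcat \<Rightarrow> 'o set \<Rightarrow> bool" where
  "subcat C D \<longleftrightarrow> D \<subseteq> tobj C \<and>
    (\<forall>X\<in>D. \<forall>Y. isomorphic C X Y \<longrightarrow> Y \<in> D) \<and>
    (\<forall>Z. is_zero_obj C Z \<longrightarrow> Z \<in> D) \<and>
    (\<forall>S X1 X2. biproduct C S X1 X2 \<and> X1 \<in> D \<and> X2 \<in> D \<longrightarrow> S \<in> D) \<and>
    (\<forall>S X1 X2. biproduct C S X1 X2 \<and> S \<in> D \<longrightarrow> X1 \<in> D \<and> X2 \<in> D)"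

definition factor_ideal :: "('o, 'm, 'k) tcat \<Rightarrow> 'o set \<Rightarrow> 'm set" where
  "factor_ideal C D = {f \<in> tmor C. \<exists>W\<in>D. \<exists>a\<in>hom C (tdom C f) W. \<exists>b\<in>hom C W (tcod C f).
      f = tcomp C b a}"

definition ObI :: "('o, 'm, 'k) tcat \<Rightarrow> 'm set \<Rightarrow> 'o set" where
  "ObI C I = {X \<in> tobj C. tid C X \<in> I}"

definition left_I_approx :: "('o, 'm, 'k) tcat \<Rightarrow> 'm set \<Rightarrow> 'o \<Rightarrow> 'm \<Rightarrow> bool" where
  "left_I_approx C I X f \<longleftrightarrow> f \<in> I \<and> tdom C f = X \<and>
    (\<forall>g\<in>I. tdom C g = X \<longrightarrow> (\<exists>h\<in>hom C (tcod C f) (tcod C g). g = tcomp C h f))"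

definition right_I_approx :: "('o, 'm, 'k) tcat \<Rightarrow> 'm set \<Rightarrow> 'o \<Rightarrow> 'm \<Rightarrow> bool" where
  "right_I_approx C I Y f \<longleftrightarrow> f \<in> I \<and> tcod C f = Y \<and>
    (\<forall>g\<in>I. tcod C g = Y \<longrightarrow> (\<exists>h\<in>hom C (tdom C g) (tdom C f). g = tcomp C f h))"

definition left_D_approx :: "('o, 'm, 'k) tcat \<Rightarrow> 'o set \<Rightarrow> 'o \<Rightarrow> 'm \<Rightarrow> bool" where
  "left_D_approx C D X f \<longleftrightarrow> f \<in> tmor C \<and> tdom C f = X \<and> tcod C f \<in> D \<and>
    (\<forall>W\<in>D. \<forall>g\<in>hom C X W. \<exists>h\<in>hom C (tcod C f) W. g = tcomp C h f)"

definition right_D_approx :: "('o, 'm, 'k) tcat \<Rightarrow> 'o set \<Rightarrow> 'o \<Rightarrow> 'm \<Rightarrow> bool" where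
  "right_D_approx C D Y f \<longleftrightarrow> f \<in> tmor C \<and> tcod C f = Y \<and> tdom C f \<in> D \<and>
    (\<forall>W\<in>D. \<forall>g\<in>hom C W Y. \<exists>h\<in>hom C W (tdom C f). g = tcomp C f h)"

definition D_mutation_pair :: "('o, 'm, 'k) tcat \<Rightarrow> 'o set \<Rightarrow> 'o set \<Rightarrow> 'o set \<Rightarrow> bool" where
  "D_mutation_pair C D \<X> \<Y> \<longleftrightarrow> D \<subseteq> \<X> \<inter> \<Y> \<and>
    (\<forall>X\<in>\<X>. \<exists>f g h. (f, g, h) \<in> ttri C \<and> tdom C f = X \<and> tcod C g \<in> \<Y> \<and>
        left_D_approx C D X f \<and> right_D_approx C D (tcod C g) g) \<and>
    (\<forall>Y\<in>\<Y>. \<exists>u v w. (u, v, w) \<in> ttri C \<and> tcod C v = Y \<and> tdom C u \<in> \<X> \<and>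
        right_D_approx C D Y v \<and> left_D_approx C D (tdom C u) u)"

definition I_mutation_pair :: "('o, 'm, 'k) tcat \<Rightarrow> 'm set \<Rightarrow> 'o set \<Rightarrow> 'o set \<Rightarrow> bool" where
  "I_mutation_pair C I \<X> \<Y> \<longleftrightarrow> ObI C I \<subseteq> \<X> \<inter> \<Y> \<and>
    (\<forall>X\<in>\<X>. \<exists>f g h. (f, g, h) \<in> ttri C \<and> tdom C f = X \<and> tcod C g \<in> \<Y> \<and>
        left_I_approx C I X f \<and> right_I_approx C I (tcod C g) g) \<and>
    (\<forall>Y\<in>\<Y>. \<exists>u v w. (u, v, w) \<in> ttri C \<and> tcod C v = Y \<and> tdom C u \<in> \<X> \<and>
        right_I_approx C I Y v \<and> left_I_approx C I (tdom C u) u)"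

end

theory Submission
  imports Defs
begin

(*
  Two facts make D and [D] interchangeable. First, Ob [D] = D: if id_X factors through some W
  in D, then X -> W is a split monomorphism, its cone exhibits X as a direct summand of W, and
  D is closed under summands. Second, in a triangle X -f-> M -g-> Y -> X[1] with f in [D] and
  g a right [D]-approximation, M lies in D: write g = d c through some W in D; as d is in [D],
  d = g t', so g kills id_M - t' c, which therefore factors through f as f psi; hence
  id_M = t' c + f psi lies in the ideal [D]. Once the middle term is in D, the [D]- and the
  D-approximations in the triangle are the same thing.
*)

locale linear_cat =
  fixes C :: "('o, 'm, 'k::field) tcat"
  assumes linear: "linear_category C"
begin

lemma category: "category C"
  using linear by (simp add: linear_category_def)

lemma hom_memD: "f \<in> hom C X Y \<Longrightarrow> f \<in> tmor C \<and> tdom C f = X \<and> tcod C f = Y"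
  by (simp add: hom_def)

lemma mor_in_hom: "f \<in> tmor C \<Longrightarrow> f \<in> hom C (tdom C f) (tcod C f)"
  by (simp add: hom_def)

lemma hom_objs: "f \<in> hom C X Y \<Longrightarrow> X \<in> tobj C \<and> Y \<in> tobj C"
  using category by (auto simp: category_def hom_def)

lemma id_in_hom: "X \<in> tobj C \<Longrightarrow> tid C X \<in> hom C X X"
  using category unfolding category_def by blast

lemma comp_in_hom: "f \<in> hom C X Y \<Longrightarrow> g \<in> hom C Y Z \<Longrightarrow> tcomp C g f \<in> hom C X Z"
  using category hom_objs unfolding category_def by blast

lemma comp_assoc: "f \<in> hom C W X \<Longrightarrow> g \<in> hom C X Y \<Longrightarrow> h \<in> hom C Y Z \<Longrightarrow>
    tcomp C h (tcomp C g f) = tcomp C (tcomp C h g) f"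
  using category hom_objs unfolding category_def by blast

lemma comp_id_left: "f \<in> hom C X Y \<Longrightarrow> tcomp C (tid C Y) f = f"
  using category unfolding category_def hom_def by blast

lemma comp_id_right: "f \<in> hom C X Y \<Longrightarrow> tcomp C f (tid C X) = f"
  using category unfolding category_def hom_def by blast

lemma zero_in_hom: "X \<in> tobj C \<Longrightarrow> Y \<in> tobj C \<Longrightarrow> tzero C X Y \<in> hom C X Y"
  using linear unfolding linear_category_def by meson

lemma add_in_hom: "f \<in> hom C X Y \<Longrightarrow> g \<in> hom C X Y \<Longrightarrow> tadd C f g \<in> hom C X Y"
  using linear hom_objs unfolding linear_category_def by meson

lemma smul_in_hom: "f \<in> hom C X Y \<Longrightarrow> tsmul C a f \<in> hom C X Y"
  using linear hom_objs unfolding linear_category_def by meson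

lemma add_assoc: "f \<in> hom C X Y \<Longrightarrow> g \<in> hom C X Y \<Longrightarrow> h \<in> hom C X Y \<Longrightarrow>
    tadd C (tadd C f g) h = tadd C f (tadd C g h)"
  using linear hom_objs unfolding linear_category_def by meson

lemma add_commute: "f \<in> hom C X Y \<Longrightarrow> g \<in> hom C X Y \<Longrightarrow> tadd C f g = tadd C g f"
  using linear hom_objs unfolding linear_category_def by meson

lemma add_zero_right: "f \<in> hom C X Y \<Longrightarrow> tadd C f (tzero C X Y) = f"
  using linear hom_objs unfolding linear_category_def by meson

lemma add_inverse: "f \<in> hom C X Y \<Longrightarrow> \<exists>g\<in>hom C X Y. tadd C f g = tzero C X Y"
  using linear hom_objs unfolding linear_category_def by meson

lemma smul_add_left: "f \<in> hom C X Y \<Longrightarrow> tsmul C (a + b) f = tadd C (tsmul C a f) (tsmul C b f)"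
  using linear hom_objs unfolding linear_category_def by meson

lemma smul_smul: "f \<in> hom C X Y \<Longrightarrow> tsmul C a (tsmul C b f) = tsmul C (a * b) f"
  using linear hom_objs unfolding linear_category_def by meson

lemma smul_one: "f \<in> hom C X Y \<Longrightarrow> tsmul C 1 f = f"
  using linear hom_objs unfolding linear_category_def by meson

lemma comp_add_left: "f \<in> hom C X Y \<Longrightarrow> g \<in> hom C Y Z \<Longrightarrow> g' \<in> hom C Y Z \<Longrightarrow>
    tcomp C (tadd C g g') f = tadd C (tcomp C g f) (tcomp C g' f)"
  using linear hom_objs unfolding linear_category_def by meson

lemma comp_add_right: "f \<in> hom C X Y \<Longrightarrow> f' \<in> hom C X Y \<Longrightarrow> g \<in> hom C Y Z \<Longrightarrow>
    tcomp C g (tadd C f f') = tadd C (tcomp C g f) (tcomp C g f')"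
  using linear hom_objs unfolding linear_category_def by meson

lemma comp_smul_left: "f \<in> hom C X Y \<Longrightarrow> g \<in> hom C Y Z \<Longrightarrow>
    tcomp C (tsmul C a g) f = tsmul C a (tcomp C g f)"
  using linear hom_objs unfolding linear_category_def by meson

lemma comp_smul_right: "f \<in> hom C X Y \<Longrightarrow> g \<in> hom C Y Z \<Longrightarrow>
    tcomp C g (tsmul C a f) = tsmul C a (tcomp C g f)"
  using linear hom_objs unfolding linear_category_def by meson

lemma add_idem_imp_zero:
  assumes x: "x \<in> hom C X Y" and idem: "tadd C x x = x"
  shows "x = tzero C X Y"
proof -
  obtain y where y: "y \<in> hom C X Y" "tadd C x y = tzero C X Y"
    using add_inverse[OF x] by blast
  have "x = tadd C x (tadd C x y)" using y add_zero_right x by simp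
  also have "\<dots> = tadd C (tadd C x x) y" using add_assoc x y by metis
  also have "\<dots> = tzero C X Y" using idem y by simp
  finally show ?thesis .
qed

lemma add_zero_left: "f \<in> hom C X Y \<Longrightarrow> tadd C (tzero C X Y) f = f"
  using add_commute add_zero_right zero_in_hom hom_objs by metis

lemma comp_zero_right:
  assumes g: "g \<in> hom C Y Z" and X: "X \<in> tobj C"
  shows "tcomp C g (tzero C X Y) = tzero C X Z"
proof -
  have z: "tzero C X Y \<in> hom C X Y" using zero_in_hom X hom_objs g by blast
  then have "tcomp C g (tzero C X Y) = tadd C (tcomp C g (tzero C X Y)) (tcomp C g (tzero C X Y))"
    using comp_add_right[OF z z g] add_zero_right by simp
  then show ?thesis using add_idem_imp_zero comp_in_hom z g by metis
qed

lemma comp_zero_left: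
  assumes f: "f \<in> hom C X Y" and Z: "Z \<in> tobj C"
  shows "tcomp C (tzero C Y Z) f = tzero C X Z"
proof -
  have z: "tzero C Y Z \<in> hom C Y Z" using zero_in_hom Z hom_objs f by blast
  then have "tcomp C (tzero C Y Z) f = tadd C (tcomp C (tzero C Y Z) f) (tcomp C (tzero C Y Z) f)"
    using comp_add_left[OF f z z] add_zero_right by simp
  then show ?thesis using add_idem_imp_zero comp_in_hom z f by metis
qed

lemma smul_zero_left: "f \<in> hom C X Y \<Longrightarrow> tsmul C 0 f = tzero C X Y"
  using smul_add_left[of f X Y 0 0] add_idem_imp_zero smul_in_hom by simp

lemma neg_in_hom: "f \<in> hom C X Y \<Longrightarrow> neg C f \<in> hom C X Y"
  by (simp add: neg_def smul_in_hom)

lemma neg_neg: "f \<in> hom C X Y \<Longrightarrow> neg C (neg C f) = f"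
  by (simp add: neg_def smul_smul smul_one)

lemma neg_zero: "X \<in> tobj C \<Longrightarrow> Y \<in> tobj C \<Longrightarrow> neg C (tzero C X Y) = tzero C X Y"
  using smul_zero_left smul_smul zero_in_hom by (metis mult_zero_right neg_def)

lemma add_neg_right: "f \<in> hom C X Y \<Longrightarrow> tadd C f (neg C f) = tzero C X Y"
  using smul_add_left[of f X Y 1 "-1"] smul_one smul_zero_left by (simp add: neg_def)

lemma comp_neg_left: "f \<in> hom C X Y \<Longrightarrow> g \<in> hom C Y Z \<Longrightarrow> tcomp C (neg C g) f = neg C (tcomp C g f)"
  by (simp add: neg_def comp_smul_left)

lemma comp_neg_right: "f \<in> hom C X Y \<Longrightarrow> g \<in> hom C Y Z \<Longrightarrow> tcomp C g (neg C f) = neg C (tcomp C g f)"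
  by (simp add: neg_def comp_smul_right)

lemma add_neg_cancel_left:
  assumes x: "x \<in> hom C X Y" and y: "y \<in> hom C X Y"
  shows "tadd C x (tadd C y (neg C x)) = y"
proof -
  have "tadd C x (tadd C y (neg C x)) = tadd C (tadd C y x) (neg C x)"
    using add_assoc[OF x y neg_in_hom[OF x]] add_commute[OF x y] by simp
  also have "\<dots> = y"
    using add_assoc[OF y x neg_in_hom[OF x]] add_neg_right[OF x] add_zero_right[OF y] by simp
  finally show ?thesis .
qed

lemma add_neg_cancel_right:
  assumes x: "x \<in> hom C X Y" and y: "y \<in> hom C X Y"
  shows "tadd C (tadd C y (neg C x)) x = y"
  using add_neg_cancel_left[OF x y] add_commute add_in_hom neg_in_hom x y by metis

lemma comp_id_minus_left:
  assumes f: "f \<in> hom C X Y" and x: "x \<in> hom C Y Y"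
  shows "tcomp C (tadd C (tid C Y) (neg C x)) f = tadd C f (neg C (tcomp C x f))"
  using comp_add_left[OF f id_in_hom neg_in_hom[OF x]] comp_id_left[OF f] comp_neg_left[OF f x]
    hom_objs[OF f] by simp

lemma comp_id_minus_right:
  assumes g: "g \<in> hom C Y Z" and x: "x \<in> hom C Y Y"
  shows "tcomp C g (tadd C (tid C Y) (neg C x)) = tadd C g (neg C (tcomp C g x))"
  using comp_add_right[OF id_in_hom neg_in_hom[OF x] g] comp_id_right[OF g] comp_neg_right[OF x g]
    hom_objs[OF g] by simp

lemma biproduct_copairing:
  assumes i1: "i1 \<in> hom C X1 S" and i2: "i2 \<in> hom C X2 S"
    and p1: "p1 \<in> hom C S X1" and p2: "p2 \<in> hom C S X2"
    and "tcomp C p1 i1 = tid C X1" "tcomp C p2 i2 = tid C X2"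
    and "tcomp C p1 i2 = tzero C X2 X1" "tcomp C p2 i1 = tzero C X1 X2"
    and b1: "b1 \<in> hom C X1 Y" and b2: "b2 \<in> hom C X2 Y"
  shows "tcomp C (tadd C (tcomp C b1 p1) (tcomp C b2 p2)) i1 = b1"
    and "tcomp C (tadd C (tcomp C b1 p1) (tcomp C b2 p2)) i2 = b2"
proof -
  have X1: "X1 \<in> tobj C" and X2: "X2 \<in> tobj C" using hom_objs i1 i2 by auto
  have bp1: "tcomp C b1 p1 \<in> hom C S Y" and bp2: "tcomp C b2 p2 \<in> hom C S Y"
    using comp_in_hom p1 p2 b1 b2 by auto
  show "tcomp C (tadd C (tcomp C b1 p1) (tcomp C b2 p2)) i1 = b1"
    using comp_add_left[OF i1 bp1 bp2] comp_assoc[OF i1 p1 b1] comp_assoc[OF i1 p2 b2] assms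
      comp_id_right[OF b1] comp_zero_right[OF b2 X1] add_zero_right[OF b1] by simp
  show "tcomp C (tadd C (tcomp C b1 p1) (tcomp C b2 p2)) i2 = b2"
    using comp_add_left[OF i2 bp1 bp2] comp_assoc[OF i2 p1 b1] comp_assoc[OF i2 p2 b2] assms
      comp_id_right[OF b2] comp_zero_right[OF b1 X2] add_zero_left[OF b2] by simp
qed

lemma biproductI_split:
  assumes a: "a \<in> hom C X W" and b: "b \<in> hom C W X" and ba: "tcomp C b a = tid C X"
    and g: "g \<in> hom C W Z" and s: "s \<in> hom C Z W" and gs: "tcomp C g s = tid C Z"
    and ga: "tcomp C g a = tzero C X Z"
    and r: "r \<in> hom C W X" and ar: "tcomp C a r = tadd C (tid C W) (neg C (tcomp C s g))"
  shows "biproduct C W X Z"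
proof -
  have X: "X \<in> tobj C" and W: "W \<in> tobj C" and Z: "Z \<in> tobj C"
    using hom_objs a g by auto
  have sg: "tcomp C s g \<in> hom C W W" using comp_in_hom g s by blast
  have "tcomp C a (tcomp C r a) = tadd C a (neg C (tcomp C s (tcomp C g a)))"
    using comp_assoc[OF a r a] ar comp_id_minus_left[OF a sg] comp_assoc[OF a g s] by simp
  also have "\<dots> = a"
    using ga comp_zero_right[OF s X] neg_zero[OF X W] add_zero_right[OF a] by simp
  finally have "tcomp C b (tcomp C a (tcomp C r a)) = tid C X" using ba by simp
  then have ra: "tcomp C r a = tid C X"
    using comp_assoc[OF comp_in_hom[OF a r] a b] ba comp_id_left[OF comp_in_hom[OF a r]] by simp
  have "tcomp C a (tcomp C r s) = tadd C s (neg C (tcomp C s (tcomp C g s)))"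
    using comp_assoc[OF s r a] ar comp_id_minus_left[OF s sg] comp_assoc[OF s g s] by simp
  also have "\<dots> = tzero C Z W" using gs comp_id_right[OF s] add_neg_right[OF s] by simp
  finally have "tcomp C b (tcomp C a (tcomp C r s)) = tzero C Z X"
    using comp_zero_right[OF b Z] by simp
  then have rs: "tcomp C r s = tzero C Z X"
    using comp_assoc[OF comp_in_hom[OF s r] a b] ba comp_id_left[OF comp_in_hom[OF s r]] by simp
  have "tadd C (tcomp C a r) (tcomp C s g) = tid C W"
    using ar add_neg_cancel_right[OF sg id_in_hom[OF W]] by simp
  then show ?thesis
    unfolding biproduct_def using W X Z a s r g ra gs rs ga by blast
qed

end

lemma factor_idealE:
  assumes "u \<in> factor_ideal C D"
  obtains W a b where "W \<in> D" "a \<in> hom C (tdom C u) W" "b \<in> hom C W (tcod C u)"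
    "u = tcomp C b a"
  using assms unfolding factor_ideal_def by blast

lemma factor_ideal_mor: "u \<in> factor_ideal C D \<Longrightarrow> u \<in> tmor C"
  unfolding factor_ideal_def by blast

context linear_cat
begin

lemma factor_idealI:
  assumes "W \<in> D" "a \<in> hom C X W" "b \<in> hom C W Y"
  shows "tcomp C b a \<in> factor_ideal C D"
proof -
  have "tcomp C b a \<in> hom C X Y" using comp_in_hom assms(2,3) by blast
  then show ?thesis unfolding factor_ideal_def using assms hom_memD by auto
qed

lemma factor_ideal_from_obj:
  assumes "subcat C D" "W \<in> D" "f \<in> hom C W Y"
  shows "f \<in> factor_ideal C D"
proof -
  have "W \<in> tobj C" using assms unfolding subcat_def by blast
  then show ?thesis
    using factor_idealI[OF assms(2) id_in_hom assms(3)] comp_id_right[OF assms(3)] by simp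
qed

lemma factor_ideal_to_obj:
  assumes "subcat C D" "W \<in> D" "f \<in> hom C X W"
  shows "f \<in> factor_ideal C D"
proof -
  have "W \<in> tobj C" using assms unfolding subcat_def by blast
  then show ?thesis
    using factor_idealI[OF assms(2) assms(3) id_in_hom] comp_id_left[OF assms(3)] by simp
qed

lemma factor_ideal_comp_right:
  assumes u: "u \<in> factor_ideal C D" and v: "v \<in> hom C X (tdom C u)"
  shows "tcomp C u v \<in> factor_ideal C D"
proof -
  obtain W a b where W: "W \<in> D" and a: "a \<in> hom C (tdom C u) W"
    and b: "b \<in> hom C W (tcod C u)" and u_eq: "u = tcomp C b a"
    using u by (rule factor_idealE)
  have "tcomp C u v = tcomp C b (tcomp C a v)" using u_eq comp_assoc[OF v a b] by simp
  then show ?thesis using factor_idealI[OF W comp_in_hom[OF v a] b] by simp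
qed


lemma left_D_approx_imp_left_I_approx:
  assumes D: "subcat C D" and L: "left_D_approx C D X f"
  shows "left_I_approx C (factor_ideal C D) X f"
  unfolding left_I_approx_def
proof (intro conjI ballI impI)
  have f: "f \<in> hom C X (tcod C f)" "tcod C f \<in> D"
    using L mor_in_hom unfolding left_D_approx_def by auto
  then show "f \<in> factor_ideal C D" using factor_ideal_to_obj[OF D] by blast
  show "tdom C f = X" using L unfolding left_D_approx_def by blast
  fix g assume g: "g \<in> factor_ideal C D" "tdom C g = X"
  obtain W a b where W: "W \<in> D" "a \<in> hom C X W" "b \<in> hom C W (tcod C g)" "g = tcomp C b a"
    using g by (auto elim: factor_idealE)
  obtain k where k: "k \<in> hom C (tcod C f) W" "a = tcomp C k f"
    using L W unfolding left_D_approx_def by blast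
  have "g = tcomp C (tcomp C b k) f" using W k comp_assoc[OF f(1) k(1) W(3)] by simp
  then show "\<exists>h\<in>hom C (tcod C f) (tcod C g). g = tcomp C h f"
    using comp_in_hom[OF k(1) W(3)] by blast
qed

lemma right_D_approx_imp_right_I_approx:
  assumes D: "subcat C D" and R: "right_D_approx C D Y f"
  shows "right_I_approx C (factor_ideal C D) Y f"
  unfolding right_I_approx_def
proof (intro conjI ballI impI)
  have f: "f \<in> hom C (tdom C f) Y" "tdom C f \<in> D"
    using R mor_in_hom unfolding right_D_approx_def by auto
  then show "f \<in> factor_ideal C D" using factor_ideal_from_obj[OF D] by blast
  show "tcod C f = Y" using R unfolding right_D_approx_def by blast
  fix g assume g: "g \<in> factor_ideal C D" "tcod C g = Y"
  obtain W a b where W: "W \<in> D" "a \<in> hom C (tdom C g) W" "b \<in> hom C W Y" "g = tcomp C b a"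
    using g by (auto elim: factor_idealE)
  obtain k where k: "k \<in> hom C W (tdom C f)" "b = tcomp C f k"
    using R W unfolding right_D_approx_def by blast
  have "g = tcomp C f (tcomp C k a)" using W k comp_assoc[OF W(2) k(1) f(1)] by simp
  then show "\<exists>h\<in>hom C (tdom C g) (tdom C f). g = tcomp C f h"
    using comp_in_hom[OF W(2) k(1)] by blast
qed

lemma left_I_approx_imp_left_D_approx:
  assumes D: "subcat C D" and L: "left_I_approx C (factor_ideal C D) X f"
    and M: "tcod C f \<in> D"
  shows "left_D_approx C D X f"
  unfolding left_D_approx_def
proof (intro conjI ballI)
  show "f \<in> tmor C" "tdom C f = X" "tcod C f \<in> D"
    using L M factor_ideal_mor unfolding left_I_approx_def by auto
  fix W g assume "W \<in> D" "g \<in> hom C X W"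
  then show "\<exists>h\<in>hom C (tcod C f) W. g = tcomp C h f"
    using L factor_ideal_to_obj[OF D] hom_memD unfolding left_I_approx_def by blast
qed

lemma right_I_approx_imp_right_D_approx:
  assumes D: "subcat C D" and R: "right_I_approx C (factor_ideal C D) Y f"
    and M: "tdom C f \<in> D"
  shows "right_D_approx C D Y f"
  unfolding right_D_approx_def
proof (intro conjI ballI)
  show "f \<in> tmor C" "tcod C f = Y" "tdom C f \<in> D"
    using R M factor_ideal_mor unfolding right_I_approx_def by auto
  fix W g assume "W \<in> D" "g \<in> hom C W Y"
  then show "\<exists>h\<in>hom C W (tdom C f). g = tcomp C f h"
    using R factor_ideal_from_obj[OF D] hom_memD unfolding right_I_approx_def by blast
qed

end

locale additive_cat =
  fixes C :: "('o, 'm, 'k::field) tcat"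
  assumes additive: "additive_category C"

sublocale additive_cat \<subseteq> linear_cat
  using additive by unfold_locales (simp add: additive_category_def)

context additive_cat
begin

lemma zero_object_exists: "\<exists>Z. is_zero_obj C Z"
  using additive unfolding additive_category_def by blast

lemma biproduct_exists: "X1 \<in> tobj C \<Longrightarrow> X2 \<in> tobj C \<Longrightarrow> \<exists>S. biproduct C S X1 X2"
  using additive unfolding additive_category_def by blast

lemma factor_ideal_add:
  assumes D: "subcat C D"
    and u: "u \<in> factor_ideal C D" "u \<in> hom C X Y" and v: "v \<in> factor_ideal C D" "v \<in> hom C X Y"
  shows "tadd C u v \<in> factor_ideal C D"
proof -
  obtain W1 a1 b1 where W1: "W1 \<in> D" "a1 \<in> hom C X W1" "b1 \<in> hom C W1 Y" "u = tcomp C b1 a1"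
    using u hom_memD by (metis factor_idealE)
  obtain W2 a2 b2 where W2: "W2 \<in> D" "a2 \<in> hom C X W2" "b2 \<in> hom C W2 Y" "v = tcomp C b2 a2"
    using v hom_memD by (metis factor_idealE)
  obtain S where S: "biproduct C S W1 W2"
    using biproduct_exists hom_objs W1 W2 by blast
  have "S \<in> D" using D S W1 W2 unfolding subcat_def by blast
  obtain i1 i2 p1 p2 where inj: "i1 \<in> hom C W1 S" "i2 \<in> hom C W2 S"
    and proj: "p1 \<in> hom C S W1" "p2 \<in> hom C S W2"
    and rel: "tcomp C p1 i1 = tid C W1" "tcomp C p2 i2 = tid C W2"
      "tcomp C p1 i2 = tzero C W2 W1" "tcomp C p2 i1 = tzero C W1 W2"
    using S unfolding biproduct_def by blast
  define b where "b = tadd C (tcomp C b1 p1) (tcomp C b2 p2)"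
  have b: "b \<in> hom C S Y" using b_def add_in_hom comp_in_hom proj W1 W2 by metis
  have bi: "tcomp C b i1 = b1" "tcomp C b i2 = b2"
    using biproduct_copairing[OF inj proj rel W1(3) W2(3)] b_def by simp_all
  have ia1: "tcomp C i1 a1 \<in> hom C X S" and ia2: "tcomp C i2 a2 \<in> hom C X S"
    using comp_in_hom inj W1 W2 by auto
  have "tadd C u v = tcomp C b (tadd C (tcomp C i1 a1) (tcomp C i2 a2))"
    using comp_add_right[OF ia1 ia2 b] comp_assoc[OF W1(2) inj(1) b] comp_assoc[OF W2(2) inj(2) b]
      bi W1(4) W2(4) by simp
  then show ?thesis
    using factor_idealI[OF \<open>S \<in> D\<close> add_in_hom[OF ia1 ia2] b] by simp
qed

end

locale triangulated_cat =
  fixes C :: "('o, 'm, 'k::field) tcat"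
  assumes triangulated: "triangulated C"

sublocale triangulated_cat \<subseteq> additive_cat
  using triangulated by unfold_locales (simp add: triangulated_def)

context triangulated_cat
begin

lemma shift: "shift_ok C"
  using triangulated by (simp add: triangulated_def)

lemma shift_obj: "X \<in> tobj C \<Longrightarrow> tshO C X \<in> tobj C"
  using shift unfolding shift_ok_def by blast

lemma shift_bij: "X \<in> tobj C \<Longrightarrow> Y \<in> tobj C \<Longrightarrow>
    bij_betw (tshM C) (hom C X Y) (hom C (tshO C X) (tshO C Y))"
  using shift unfolding shift_ok_def by blast

lemma shift_in_hom: "f \<in> hom C X Y \<Longrightarrow> tshM C f \<in> hom C (tshO C X) (tshO C Y)"
  using shift_bij hom_objs bij_betwE by blast

lemma shift_inj: "f \<in> hom C X Y \<Longrightarrow> g \<in> hom C X Y \<Longrightarrow> tshM C f = tshM C g \<Longrightarrow> f = g"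
  using shift_bij hom_objs by (metis bij_betw_imp_inj_on inj_onD)

lemma shift_surj: "X \<in> tobj C \<Longrightarrow> Y \<in> tobj C \<Longrightarrow> c \<in> hom C (tshO C X) (tshO C Y) \<Longrightarrow>
    \<exists>f\<in>hom C X Y. tshM C f = c"
  using shift_bij by (metis bij_betw_imp_surj_on imageE)

lemma shift_id: "X \<in> tobj C \<Longrightarrow> tshM C (tid C X) = tid C (tshO C X)"
  using shift unfolding shift_ok_def by blast

lemma shift_comp: "f \<in> hom C X Y \<Longrightarrow> g \<in> hom C Y Z \<Longrightarrow>
    tshM C (tcomp C g f) = tcomp C (tshM C g) (tshM C f)"
  using shift hom_objs unfolding shift_ok_def by meson

lemma triangle_shape: "(f, g, h) \<in> ttri C \<Longrightarrow> tri_shape C (f, g, h)"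
  using triangulated unfolding triangulated_def by meson

lemma triangle_homs:
  assumes "(f, g, h) \<in> ttri C"
  shows "f \<in> hom C (tdom C f) (tcod C f)" "g \<in> hom C (tcod C f) (tcod C g)"
    "h \<in> hom C (tcod C g) (tshO C (tdom C f))"
  using triangle_shape[OF assms] by (auto simp: tri_shape_def hom_def)

lemma triangle_exists: "f \<in> tmor C \<Longrightarrow> \<exists>g h. (f, g, h) \<in> ttri C"
  using triangulated unfolding triangulated_def by meson

lemma triangle_identity:
  "X \<in> tobj C \<Longrightarrow> is_zero_obj C Z \<Longrightarrow> (tid C X, tzero C X Z, tzero C Z (tshO C X)) \<in> ttri C"
  using triangulated unfolding triangulated_def by meson

lemma triangle_rotate: "(f, g, h) \<in> ttri C \<Longrightarrow> (g, h, neg C (tshM C f)) \<in> ttri C"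
  using triangulated triangle_shape unfolding triangulated_def by meson

lemma triangle_morphism:
  assumes "(f, g, h) \<in> ttri C" "(f', g', h') \<in> ttri C"
    "a \<in> hom C (tdom C f) (tdom C f')" "b \<in> hom C (tcod C f) (tcod C f')"
    "tcomp C b f = tcomp C f' a"
  shows "\<exists>c\<in>hom C (tcod C g) (tcod C g').
    tcomp C c g = tcomp C g' b \<and> tcomp C (tshM C a) h = tcomp C h' c"
  using triangulated assms unfolding triangulated_def by meson

lemma triangle_comp_zero:
  assumes t: "(f, g, h) \<in> ttri C"
  shows "tcomp C g f = tzero C (tdom C f) (tcod C g)"
proof -
  define X where "X = tdom C f"
  have f: "f \<in> hom C X (tcod C f)" using triangle_homs[OF t] X_def by simp
  have X: "X \<in> tobj C" using hom_objs f by blast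
  obtain Z where Z: "is_zero_obj C Z" using zero_object_exists by blast
  have zero_XZ: "tzero C X Z \<in> hom C X Z" using zero_in_hom X Z by (simp add: is_zero_obj_def)
  have id_X: "tid C X \<in> hom C X X" using id_in_hom[OF X] .
  have "tid C X \<in> hom C (tdom C (tid C X)) (tdom C f)" "f \<in> hom C (tcod C (tid C X)) (tcod C f)"
    using id_X f hom_memD[OF id_X] X_def by auto
  then obtain c where "c \<in> hom C (tcod C (tzero C X Z)) (tcod C g)"
    and "tcomp C c (tzero C X Z) = tcomp C g f"
    using triangle_morphism[OF triangle_identity[OF X Z] t] by blast
  then have c: "c \<in> hom C Z (tcod C g)" "tcomp C c (tzero C X Z) = tcomp C g f"
    using hom_memD[OF zero_XZ] by auto
  then show ?thesis using comp_zero_right[OF c(1) X] X_def by simp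
qed

text \<open>Rotate the trivial triangle on M' and apply TR3; then use that the shift is full and
  faithful.\<close>
lemma triangle_factor_through_first:
  assumes t: "(f, g, h) \<in> ttri C"
    and \<phi>: "\<phi> \<in> hom C M' (tcod C f)" and g\<phi>: "tcomp C g \<phi> = tzero C M' (tcod C g)"
  shows "\<exists>\<psi>\<in>hom C M' (tdom C f). \<phi> = tcomp C f \<psi>"
proof -
  define X M Y where "X = tdom C f" and "M = tcod C f" and "Y = tcod C g"
  have f: "f \<in> hom C X M" and g: "g \<in> hom C M Y" and h: "h \<in> hom C Y (tshO C X)"
    using triangle_homs[OF t] X_def M_def Y_def by auto
  have X: "X \<in> tobj C" and Y: "Y \<in> tobj C" and M': "M' \<in> tobj C"
    using hom_objs f g \<phi> by auto
  obtain Z where Z: "is_zero_obj C Z" using zero_object_exists by blast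
  have Z_obj: "Z \<in> tobj C" using Z by (simp add: is_zero_obj_def)
  have zero_M'Z: "tzero C M' Z \<in> hom C M' Z" and zero_ZY: "tzero C Z Y \<in> hom C Z Y"
    and zero_ZM'1: "tzero C Z (tshO C M') \<in> hom C Z (tshO C M')"
    using zero_in_hom shift_obj M' Y Z_obj by auto
  have "tcomp C (tzero C Z Y) (tzero C M' Z) = tcomp C g \<phi>"
    using comp_zero_left[OF zero_M'Z Y] g\<phi> Y_def by simp
  then obtain c where c: "c \<in> hom C (tshO C M') (tshO C X)"
    and c_eq: "tcomp C (tshM C \<phi>) (neg C (tshM C (tid C M'))) = tcomp C (neg C (tshM C f)) c"
    using triangle_morphism[OF triangle_rotate[OF triangle_identity[OF M' Z]] triangle_rotate[OF t],
        of \<phi> "tzero C Z Y"]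
      \<phi> zero_ZY hom_memD[OF zero_M'Z] hom_memD[OF zero_ZM'1] hom_memD[OF g] hom_memD[OF h] M_def
    by auto
  have \<phi>1: "tshM C \<phi> \<in> hom C (tshO C M') (tshO C M)" using shift_in_hom \<phi> M_def by simp
  have f1: "tshM C f \<in> hom C (tshO C X) (tshO C M)" using shift_in_hom f by blast
  have "neg C (tshM C \<phi>) = neg C (tcomp C (tshM C f) c)"
    using c_eq shift_id[OF M'] comp_neg_right[OF id_in_hom[OF shift_obj[OF M']] \<phi>1]
      comp_id_right[OF \<phi>1] comp_neg_left[OF c f1] by simp
  then have "tshM C \<phi> = tcomp C (tshM C f) c"
    using neg_neg \<phi>1 comp_in_hom[OF c f1] by metis
  moreover obtain \<psi> where \<psi>: "\<psi> \<in> hom C M' X" "tshM C \<psi> = c"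
    using shift_surj[OF M' X c] by blast
  ultimately have "tshM C \<phi> = tshM C (tcomp C f \<psi>)" using shift_comp[OF \<psi>(1) f] by simp
  then have "\<phi> = tcomp C f \<psi>" using shift_inj \<phi> comp_in_hom[OF \<psi>(1) f] M_def by metis
  then show ?thesis using \<psi> X_def by blast
qed

lemma triangle_split_mono_imp_third_zero:
  assumes t: "(a, g, h) \<in> ttri C" and a: "a \<in> hom C X W" and b: "b \<in> hom C W X"
    and ba: "tcomp C b a = tid C X"
  shows "h = tzero C (tcod C g) (tshO C X)"
proof -
  define Z where "Z = tcod C g"
  have h: "h \<in> hom C Z (tshO C X)" using triangle_homs(3)[OF t] hom_memD[OF a] Z_def by simp
  have X: "X \<in> tobj C" and W: "W \<in> tobj C" and Z_obj: "Z \<in> tobj C"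
    using hom_objs a h by auto
  have a1: "tshM C a \<in> hom C (tshO C X) (tshO C W)" and b1: "tshM C b \<in> hom C (tshO C W) (tshO C X)"
    using shift_in_hom a b by auto
  have "tcomp C (neg C (tshM C a)) h = tzero C Z (tshO C W)"
    using triangle_comp_zero[OF triangle_rotate[OF triangle_rotate[OF t]]]
      hom_memD[OF h] hom_memD[OF neg_in_hom[OF a1]] by simp
  then have "tcomp C (tshM C a) h = tzero C Z (tshO C W)"
    using comp_neg_left[OF h a1] neg_neg[OF comp_in_hom[OF h a1]] neg_zero[OF Z_obj shift_obj[OF W]]
    by metis
  then have "tcomp C (tshM C (tcomp C b a)) h = tzero C Z (tshO C X)"
    using shift_comp[OF a b] comp_assoc[OF h a1 b1] comp_zero_right[OF b1 Z_obj] by simp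
  then show ?thesis using ba shift_id[OF X] comp_id_left[OF h] Z_def by simp
qed

lemma triangle_third_zero_imp_split_epi:
  assumes t: "(f, g, h) \<in> ttri C" and h0: "h = tzero C (tcod C g) (tshO C (tdom C f))"
  shows "\<exists>s\<in>hom C (tcod C g) (tcod C f). tcomp C g s = tid C (tcod C g)"
proof -
  define Z where "Z = tcod C g"
  have h: "h \<in> hom C Z (tshO C (tdom C f))" using triangle_homs(3)[OF t] Z_def by simp
  have Z_obj: "Z \<in> tobj C" using hom_objs h by blast
  have "tcomp C h (tid C Z) = tzero C Z (tcod C h)"
    using comp_id_right[OF h] h0 hom_memD[OF h] Z_def by simp
  then show ?thesis
    using triangle_factor_through_first[OF triangle_rotate[OF t], of "tid C Z" Z] id_in_hom[OF Z_obj]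
      triangle_homs(2)[OF t] hom_memD Z_def by metis
qed

lemma split_mono_summand:
  assumes a: "a \<in> hom C X W" and b: "b \<in> hom C W X" and ba: "tcomp C b a = tid C X"
  shows "\<exists>Z. biproduct C W X Z"
proof -
  obtain g h where t: "(a, g, h) \<in> ttri C" using triangle_exists hom_memD[OF a] by blast
  define Z where "Z = tcod C g"
  have g: "g \<in> hom C W Z" using triangle_homs(2)[OF t] hom_memD[OF a] Z_def by simp
  have W: "W \<in> tobj C" using hom_objs a by blast
  obtain s where s: "s \<in> hom C Z W" "tcomp C g s = tid C Z"
    using triangle_third_zero_imp_split_epi[OF t] triangle_split_mono_imp_third_zero[OF t a b ba]
      hom_memD[OF a] Z_def by auto
  have ga: "tcomp C g a = tzero C X Z" using triangle_comp_zero[OF t] hom_memD[OF a] Z_def by simp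
  define e where "e = tadd C (tid C W) (neg C (tcomp C s g))"
  have sg: "tcomp C s g \<in> hom C W W" using comp_in_hom g s by blast
  have e: "e \<in> hom C W (tcod C a)"
    using e_def add_in_hom id_in_hom[OF W] neg_in_hom[OF sg] hom_memD[OF a] by simp
  have "tcomp C g e = tadd C g (neg C (tcomp C (tcomp C g s) g))"
    using comp_id_minus_right[OF g sg] comp_assoc[OF g s(1) g] e_def by simp
  then have "tcomp C g e = tzero C W (tcod C g)"
    using s(2) comp_id_left[OF g] add_neg_right[OF g] Z_def by simp
  then obtain r where r: "r \<in> hom C W X" "e = tcomp C a r"
    using triangle_factor_through_first[OF t e] hom_memD[OF a] by auto
  show ?thesis using biproductI_split[OF a b ba g s ga r(1)] r(2) e_def by auto
qed


lemma ObI_factor_ideal: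
  assumes D: "subcat C D"
  shows "ObI C (factor_ideal C D) = D"
proof
  show "D \<subseteq> ObI C (factor_ideal C D)"
    using D factor_ideal_to_obj id_in_hom unfolding ObI_def subcat_def by blast
  show "ObI C (factor_ideal C D) \<subseteq> D"
  proof
    fix X assume "X \<in> ObI C (factor_ideal C D)"
    then have X: "X \<in> tobj C" "tid C X \<in> factor_ideal C D" unfolding ObI_def by auto
    then obtain W a b where "W \<in> D" "a \<in> hom C X W" "b \<in> hom C W X" "tcomp C b a = tid C X"
      using hom_memD[OF id_in_hom[OF X(1)]] by (metis factor_idealE)
    then obtain Z where "biproduct C W X Z" using split_mono_summand by blast
    with \<open>W \<in> D\<close> show "X \<in> D" using D unfolding subcat_def by blast
  qed
qed

lemma triangle_middle_in_subcat:
  assumes D: "subcat C D" and t: "(f, g, h) \<in> ttri C" and f_D: "f \<in> factor_ideal C D"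
    and R: "right_I_approx C (factor_ideal C D) (tcod C g) g"
  shows "tcod C f \<in> D"
proof -
  define X M Y where "X = tdom C f" and "M = tcod C f" and "Y = tcod C g"
  have f: "f \<in> hom C X M" and g: "g \<in> hom C M Y"
    using triangle_homs[OF t] X_def M_def Y_def by auto
  have M: "M \<in> tobj C" using hom_objs f by blast
  have "g \<in> factor_ideal C D" using R unfolding right_I_approx_def by blast
  then obtain W c d where W: "W \<in> D" and c: "c \<in> hom C M W" and d: "d \<in> hom C W Y"
    and g_eq: "g = tcomp C d c"
    using hom_memD[OF g] by (metis factor_idealE)
  have "\<exists>k\<in>hom C (tdom C d) (tdom C g). d = tcomp C g k"
    using R factor_ideal_from_obj[OF D W d] hom_memD[OF d] Y_def
    unfolding right_I_approx_def by blast
  then obtain t' where t': "t' \<in> hom C W M" and d_eq: "d = tcomp C g t'"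
    using hom_memD[OF d] hom_memD[OF g] by auto
  have t'c: "tcomp C t' c \<in> hom C M M" using comp_in_hom c t' by blast
  define \<phi> where "\<phi> = tadd C (tid C M) (neg C (tcomp C t' c))"
  have \<phi>: "\<phi> \<in> hom C M (tcod C f)"
    using \<phi>_def add_in_hom id_in_hom[OF M] neg_in_hom[OF t'c] M_def by simp
  have "tcomp C g \<phi> = tadd C g (neg C (tcomp C (tcomp C g t') c))"
    using comp_id_minus_right[OF g t'c] comp_assoc[OF c t' g] \<phi>_def by simp
  then have "tcomp C g \<phi> = tzero C M (tcod C g)"
    using d_eq[symmetric] g_eq[symmetric] add_neg_right[OF g] Y_def by simp
  then obtain \<psi> where \<psi>: "\<psi> \<in> hom C M X" and \<phi>_eq: "\<phi> = tcomp C f \<psi>"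
    using triangle_factor_through_first[OF t \<phi>] X_def by auto
  have "tcomp C t' c \<in> factor_ideal C D" using factor_idealI[OF W c t'] .
  moreover have "tcomp C f \<psi> \<in> factor_ideal C D"
    using factor_ideal_comp_right[OF f_D] \<psi> X_def by simp
  moreover have "tadd C (tcomp C t' c) (tcomp C f \<psi>) = tid C M"
    using add_neg_cancel_left[OF t'c id_in_hom[OF M]] \<phi>_def \<phi>_eq by simp
  ultimately have "tid C M \<in> factor_ideal C D"
    using factor_ideal_add[OF D _ t'c _ comp_in_hom[OF \<psi> f]] by simp
  then show ?thesis using ObI_factor_ideal[OF D] M M_def unfolding ObI_def by blast
qed

lemma triangle_D_approx_iff_I_approx:
  assumes D: "subcat C D" and t: "(f, g, h) \<in> ttri C"
  shows "left_D_approx C D X f \<and> right_D_approx C D Y g \<longleftrightarrow>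
    left_I_approx C (factor_ideal C D) X f \<and> right_I_approx C (factor_ideal C D) Y g"
proof
  assume "left_D_approx C D X f \<and> right_D_approx C D Y g"
  then show "left_I_approx C (factor_ideal C D) X f \<and> right_I_approx C (factor_ideal C D) Y g"
    using left_D_approx_imp_left_I_approx[OF D] right_D_approx_imp_right_I_approx[OF D] by blast
next
  assume I: "left_I_approx C (factor_ideal C D) X f \<and> right_I_approx C (factor_ideal C D) Y g"
  then have "f \<in> factor_ideal C D" "tcod C g = Y"
    unfolding left_I_approx_def right_I_approx_def by auto
  then have "tcod C f \<in> D" using triangle_middle_in_subcat[OF D t] I by blast
  moreover have "tdom C g = tcod C f" using triangle_shape[OF t] by (simp add: tri_shape_def)
  ultimately show "left_D_approx C D X f \<and> right_D_approx C D Y g"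
    using I left_I_approx_imp_left_D_approx[OF D] right_I_approx_imp_right_D_approx[OF D]
    by simp
qed

end

theorem proposition3p2:
  fixes C :: "('o, 'm, 'k::field) tcat"
    and D \<X> \<Y> :: "'o set"
  assumes "alg_closed TYPE('k)"
    and "triangulated C"
    and "hom_finite C"
    and "krull_schmidt C"
    and "subcat C D" and "subcat C \<X>" and "subcat C \<Y>"
  shows "D_mutation_pair C D \<X> \<Y> \<longleftrightarrow> I_mutation_pair C (factor_ideal C D) \<X> \<Y>"
proof -
  interpret triangulated_cat C using assms(2) by unfold_locales
  note approx_iff = triangle_D_approx_iff_I_approx[OF assms(5)]
  have approx_iff_swapped: "right_D_approx C D Y g \<and> left_D_approx C D X f \<longleftrightarrow>
      right_I_approx C (factor_ideal C D) Y g \<and> left_I_approx C (factor_ideal C D) X f"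
    if "(f, g, h) \<in> ttri C" for f g h X Y
    using approx_iff[OF that, of X Y] by blast
  show ?thesis
    unfolding D_mutation_pair_def I_mutation_pair_def ObI_factor_ideal[OF assms(5)]
    by (simp add: approx_iff approx_iff_swapped cong: conj_cong)
qed
end
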